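(* Let $S$ be the antipode of $C(q)$. Then for every $n\ge0$, $\mathrm{St}_n=(-1)^nS(1_{\mathfrak{gl}_n(\mathbb{F}_q)})$.
   Context: Let $q$ be a prime power, $C_n(q)$ the complex functions on $\mathfrak{gl}_n(\mathbb{F}_q)$ invariant under $\mathrm{GL}_n(\mathbb{F}_q)$-conjugation, and $C(q)=\bigoplus_nC_n(q)$ the connected graded Hopf algebra over $\mathbb{C}$ with multiplication given by Harish-Chandra induction from block-diagonal Levis $\mathfrak{gl}_k\times\mathfrak{gl}_l\subseteq\mathfrak{gl}_{k+l}$, co-multiplication on $C_n(q)$ given by $\sum_{k+l=n}$ of Harish-Chandra restrictions to $\mathfrak{gl}_k\times\mathfrak{gl}_l$, unit/co-unit the inclusion of/projection to $C_0(q)=\mathbb{C}$. The duality operation is $\mathcal{D}_n(f)=\sum_P(-1)^{r(P)}R^{\mathcal{G}_n}_{\mathcal{L}_P}{}^*R^{\mathcal{G}_n}_{\mathcal{L}_P}(f)$, summed over the $F$-stable parabolics containing a fixed $F$-stable Borel of $\mathrm{GL}_n$, with $\mathcal{L}_P$ the Lie algebra of an $F$-stable Levi of $P$ and $r(P)$ its semisimple $\mathbb{F}_q$-rank. $1_{\mathfrak{gl}_n(\mathbb{F}_q)}$ is the constant function $1$, and the Steinberg function is $\mathrm{St}_n:=\mathcal{D}_n(1_{\mathfrak{gl}_n(\mathbb{F}_q)})$. *)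

theory Defs
  imports Complex_Main
begin

type_synonym 'a mat = "nat \<Rightarrow> nat \<Rightarrow> 'a"

definition gl :: "nat \<Rightarrow> ('a::field) mat set" where
  "gl n = {A. \<forall>i j. (n \<le> i \<or> n \<le> j) \<longrightarrow> A i j = 0}"

definition mmul :: "nat \<Rightarrow> ('a::field) mat \<Rightarrow> 'a mat \<Rightarrow> 'a mat" where
  "mmul n A B = (\<lambda>i j. if i < n \<and> j < n then (\<Sum>k<n. A i k * B k j) else 0)"

definition madd :: "('a::field) mat \<Rightarrow> 'a mat \<Rightarrow> 'a mat" where
  "madd A B = (\<lambda>i j. A i j + B i j)"

definition idm :: "nat \<Rightarrow> ('a::field) mat" where
  "idm n = (\<lambda>i j. if i = j \<and> i < n then 1 else 0)"

definition GL :: "nat \<Rightarrow> ('a::field) mat set" where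
  "GL n = {g \<in> gl n. \<exists>h \<in> gl n. mmul n g h = idm n}"

definition ginv :: "nat \<Rightarrow> ('a::field) mat \<Rightarrow> 'a mat" where
  "ginv n g = (SOME h. h \<in> gl n \<and> mmul n g h = idm n)"

definition adinv :: "nat \<Rightarrow> ('a::field) mat \<Rightarrow> 'a mat \<Rightarrow> 'a mat" where
  "adinv n g x = mmul n (mmul n (ginv n g) x) g"

text \<open>The space C_n(q) of GL_n(F_q)-conjugation invariant functions on gl_n(F_q)
  (only values on gl n are relevant).\<close>
definition invariant_fun :: "nat \<Rightarrow> (('a::field) mat \<Rightarrow> complex) \<Rightarrow> bool" where
  "invariant_fun n f \<longleftrightarrow> (\<forall>g \<in> GL n. \<forall>x \<in> gl n. f (adinv n g x) = f x)"

text \<open>block index of row/column i (blocks ordered along the diagonal); zero parts allowed\<close>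
definition blk :: "nat list \<Rightarrow> nat \<Rightarrow> nat" where
  "blk c i = card {j \<in> {1..length c}. sum_list (take j c) \<le> i}"

definition parab :: "nat list \<Rightarrow> ('a::field) mat set" where
  "parab c = {A \<in> gl (sum_list c). \<forall>i j. blk c j < blk c i \<longrightarrow> A i j = 0}"

definition nilrad :: "nat list \<Rightarrow> ('a::field) mat set" where
  "nilrad c = {A \<in> gl (sum_list c). \<forall>i j. blk c j \<le> blk c i \<longrightarrow> A i j = 0}"

definition levi_proj :: "nat list \<Rightarrow> ('a::field) mat \<Rightarrow> 'a mat" where
  "levi_proj c A = (\<lambda>i j. if blk c i = blk c j then A i j else 0)"

definition Pgrp :: "nat list \<Rightarrow> ('a::field) mat set" where
  "Pgrp c = GL (sum_list c) \<inter> parab c"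

definition Ugrp :: "nat list \<Rightarrow> ('a::field) mat set" where
  "Ugrp c = {g \<in> GL (sum_list c). (\<lambda>i j. g i j - idm (sum_list c) i j) \<in> nilrad c}"

text \<open>A function on l_c is represented as a function on matrices (evaluated on l_c only).\<close>
definition HCind :: "nat list \<Rightarrow> (('a::{finite,field}) mat \<Rightarrow> complex) \<Rightarrow> 'a mat \<Rightarrow> complex" where
  "HCind c f x = (1 / of_nat (card (Pgrp c :: 'a mat set))) *
     (\<Sum>g \<in> {g \<in> GL (sum_list c). adinv (sum_list c) g x \<in> parab c}.
         f (levi_proj c (adinv (sum_list c) g x)))"

definition HCres :: "nat list \<Rightarrow> (('a::{finite,field}) mat \<Rightarrow> complex) \<Rightarrow> 'a mat \<Rightarrow> complex" where
  "HCres c f y = (1 / of_nat (card (Ugrp c :: 'a mat set))) *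
     (\<Sum>v \<in> nilrad c. f (madd y v))"

lemma HCind_cong [fundef_cong]:
  "c = c' \<Longrightarrow> x = x' \<Longrightarrow> (\<And>y. f y = f' y) \<Longrightarrow> HCind c f x = HCind c' f' x'"
  by (simp add: HCind_def)

text \<open>standard parabolics containing the upper triangular Borel <-> compositions of n\<close>
definition compositions :: "nat \<Rightarrow> nat list set" where
  "compositions n = {c. sum_list c = n \<and> 0 \<notin> set c}"

text \<open>semisimple F_q-rank of the Levi GL_{c_1} x ... x GL_{c_r}\<close>
definition ss_rank :: "nat list \<Rightarrow> nat" where
  "ss_rank c = sum_list c - length c"

definition duality :: "nat \<Rightarrow> (('a::{finite,field}) mat \<Rightarrow> complex) \<Rightarrow> 'a mat \<Rightarrow> complex" where
  "duality n f x = (\<Sum>c \<in> compositions n. (-1) ^ ss_rank c * HCind c (HCres c f) x)"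

definition Steinberg :: "nat \<Rightarrow> ('a::{finite,field}) mat \<Rightarrow> complex" where
  "Steinberg n = duality n (\<lambda>_. 1)"

definition bdiag :: "nat \<Rightarrow> ('a::field) mat \<Rightarrow> 'a mat \<Rightarrow> 'a mat" where
  "bdiag k a b = (\<lambda>i j. if i < k \<and> j < k then a i j
                        else if k \<le> i \<and> k \<le> j then b (i - k) (j - k) else 0)"

definition upblk :: "nat \<Rightarrow> ('a::field) mat \<Rightarrow> 'a mat" where
  "upblk k y = (\<lambda>i j. if i < k \<and> j < k then y i j else 0)"

definition lowblk :: "nat \<Rightarrow> ('a::field) mat \<Rightarrow> 'a mat" where
  "lowblk k y = (\<lambda>i j. y (i + k) (j + k))"

text \<open>The antipode S of the connected graded Hopf algebra C(q), on the degree n part,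
  given by the standard recursion S(x) = - sum_{k<n} m (S (x) id) Delta_{k,n-k}(x) for n >= 1
  and S = id on C_0 = C.  Here C_k (x) C_l is identified with invariant functions on
  l_[k,l] = gl_k x gl_l, Delta_{k,l} = *R_[k,l], m = R_[k,l], and (S (x) id)(F)(diag(a,b)) =
  S_k(F(diag(-,b)))(a).\<close>
function antipode :: "nat \<Rightarrow> (('a::{finite,field}) mat \<Rightarrow> complex) \<Rightarrow> 'a mat \<Rightarrow> complex" where
  "antipode n f x =
     (if n = 0 then f x
      else - (\<Sum>k<n. HCind [k, n - k]
                (\<lambda>y. antipode k (\<lambda>a. HCres [k, n - k] f (bdiag k a (lowblk k y))) (upblk k y)) x))"
  by pat_completeness auto
termination
  by (relation "measure (\<lambda>(n, f, x). n)") auto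

end

theory Submission
  imports Defs
begin

text \<open>
  Harish-Chandra restriction maps the constant function 1 to 1, since v \<mapsto> 1 + v is a
  bijection from the nilradical u_c onto U_c. Hence St_n is the alternating sum over the
  compositions c of n of R_c(1), and the recursion for the antipode becomes
  S_n(1) = - \<Sum>_{k<n} R_(k,n-k)(S_k(1) \<otimes> 1). By induction S_k(1) = (-1)^k St_k, and the claim
  reduces to transitivity of induction, R_(k,n-k)(R_d(1) \<otimes> 1) = R_(d,n-k)(1) for every
  composition d of k: each composition of n arises exactly once as d followed by a last part
  n - k, and the signs match. Transitivity follows from two double counts over pairs (g, h) in
  GL_n \<times> GL_k related by the substitution g \<mapsto> g diag(h, 1): one for the conjugation
  condition defining R, one giving |P_(k,n-k)| |P_d| = |P_(d,n-k)| |GL_k|.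
\<close>

lemma finite_gl: "finite (gl n :: ('a::{finite,field}) mat set)"
proof -
  let ?S = "{f :: nat \<times> nat \<Rightarrow> 'a. \<forall>x. (x \<in> {..<n} \<times> {..<n} \<longrightarrow> f x \<in> UNIV)
                                   \<and> (x \<notin> {..<n} \<times> {..<n} \<longrightarrow> f x = 0)}"
  have "finite ?S" by (rule finite_set_of_finite_funs) auto
  moreover have "gl n \<subseteq> curry ` ?S"
  proof
    fix A :: "'a mat" assume "A \<in> gl n"
    then have "case_prod A \<in> ?S" by (auto simp: gl_def)
    moreover have "A = curry (case_prod A)" by simp
    ultimately show "A \<in> curry ` ?S" by blast
  qed
  ultimately show ?thesis using finite_subset by blast
qed

lemma mmul_in_gl [simp]: "mmul n A B \<in> gl n"
  by (auto simp: gl_def mmul_def)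

lemma idm_in_gl [simp]: "idm n \<in> gl n"
  by (auto simp: gl_def idm_def)

lemma mmul_assoc: "mmul n (mmul n A B) C = mmul n A (mmul n B C)"
  unfolding mmul_def
  by (auto intro!: ext simp: sum_distrib_left sum_distrib_right mult.assoc intro: sum.swap)

lemma mmul_idm_left: "A \<in> gl n \<Longrightarrow> mmul n (idm n) A = A"
  unfolding mmul_def idm_def gl_def
  by (auto intro!: ext simp: if_distrib[of "\<lambda>a. a * _"] cong: if_cong)

lemma mmul_idm_right: "A \<in> gl n \<Longrightarrow> mmul n A (idm n) = A"
  unfolding mmul_def idm_def gl_def
  by (auto intro!: ext simp: if_distrib[of "\<lambda>a. _ * a"] cong: if_cong)

lemma mmul_idm_commute:
  fixes A B :: "('a::{finite,field}) mat"
  assumes A: "A \<in> gl n" and B: "B \<in> gl n" and AB: "mmul n A B = idm n"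
  shows "mmul n B A = idm n"
proof -
  let ?f = "mmul n A"
  have "?f ` gl n = gl n"
  proof
    show "?f ` gl n \<subseteq> gl n" by auto
    show "gl n \<subseteq> ?f ` gl n"
    proof
      fix z :: "'a mat" assume "z \<in> gl n"
      then have "?f (mmul n B z) = z" by (simp add: mmul_assoc[symmetric] AB mmul_idm_left)
      then show "z \<in> ?f ` gl n" by (metis image_eqI mmul_in_gl)
    qed
  qed
  then have inj: "inj_on ?f (gl n)" by (intro eq_card_imp_inj_on finite_gl) simp
  have "?f (mmul n B A) = ?f (idm n)"
    by (simp add: mmul_assoc[symmetric] AB mmul_idm_left mmul_idm_right A)
  then show ?thesis using inj_onD[OF inj] by auto
qed

lemma GL_imp_gl: "g \<in> GL n \<Longrightarrow> g \<in> gl n"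
  by (simp add: GL_def)

lemma GL_I: "g \<in> gl n \<Longrightarrow> h \<in> gl n \<Longrightarrow> mmul n g h = idm n \<Longrightarrow> g \<in> GL n"
  by (auto simp: GL_def)

lemma
  fixes g :: "('a::{finite,field}) mat"
  assumes "g \<in> GL n"
  shows ginv_in_gl: "ginv n g \<in> gl n"
    and mmul_ginv_right: "mmul n g (ginv n g) = idm n"
    and mmul_ginv_left: "mmul n (ginv n g) g = idm n"
proof -
  have "\<exists>h. h \<in> gl n \<and> mmul n g h = idm n" using assms by (auto simp: GL_def)
  from someI_ex[OF this] show gl: "ginv n g \<in> gl n" and right: "mmul n g (ginv n g) = idm n"
    unfolding ginv_def by auto
  show "mmul n (ginv n g) g = idm n"
    using mmul_idm_commute[OF GL_imp_gl[OF assms] gl right] .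
qed

lemma ginv_eqI:
  fixes g :: "('a::{finite,field}) mat"
  assumes g: "g \<in> gl n" and h: "h \<in> gl n" and gh: "mmul n g h = idm n"
  shows "ginv n g = h"
proof -
  have G: "g \<in> GL n" using g h gh by (rule GL_I)
  have "h = mmul n (mmul n (ginv n g) g) h"
    using h by (simp add: mmul_ginv_left[OF G] mmul_idm_left)
  also have "\<dots> = ginv n g" by (simp add: mmul_assoc gh mmul_idm_right ginv_in_gl[OF G])
  finally show ?thesis by simp
qed

lemma idm_in_GL: "idm n \<in> GL n"
  by (rule GL_I[of _ _ "idm n"]) (auto simp: mmul_idm_left)

lemma ginv_in_GL: "g \<in> GL n \<Longrightarrow> ginv n (g :: ('a::{finite,field}) mat) \<in> GL n"
  by (rule GL_I[OF ginv_in_gl GL_imp_gl mmul_ginv_left])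

lemma mmul_in_GL:
  fixes g h :: "('a::{finite,field}) mat"
  assumes g: "g \<in> GL n" and h: "h \<in> GL n"
  shows "mmul n g h \<in> GL n"
proof (rule GL_I[OF mmul_in_gl mmul_in_gl])
  have "mmul n (mmul n g h) (mmul n (ginv n h) (ginv n g))
      = mmul n g (mmul n (mmul n h (ginv n h)) (ginv n g))"
    by (simp add: mmul_assoc)
  also have "\<dots> = idm n"
    by (simp add: mmul_ginv_right[OF g] mmul_ginv_right[OF h] mmul_idm_left ginv_in_gl[OF g])
  finally show "mmul n (mmul n g h) (mmul n (ginv n h) (ginv n g)) = idm n" .
qed

lemma finite_GL: "finite (GL n :: ('a::{finite,field}) mat set)"
  using finite_gl by (rule finite_subset[rotated]) (auto simp: GL_def)

lemma card_GL_gt_0: "card (GL n :: ('a::{finite,field}) mat set) > 0"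
  using finite_GL idm_in_GL by (metis card_gt_0_iff empty_iff)

lemma adinv_in_gl [simp]: "adinv n g x \<in> gl n"
  by (simp add: adinv_def)

section \<open>The embedding of GL_k into GL_n as diag(h, 1)\<close>

definition diag1 :: "nat \<Rightarrow> nat \<Rightarrow> ('a::field) mat \<Rightarrow> 'a mat" where
  "diag1 k n h = bdiag k h (idm (n - k))"

lemma diag1_entry: "diag1 k n a i l = (if i < k \<and> l < k then a i l
   else if k \<le> i \<and> k \<le> l then (if i = l \<and> i < n then 1 else 0) else 0)"
  by (auto simp: diag1_def bdiag_def idm_def)

lemma sum_lessThan_truncate:
  fixes k n :: nat
  assumes "k \<le> n" "\<And>l. k \<le> l \<Longrightarrow> l < n \<Longrightarrow> f l = 0"
  shows "sum f {..<n} = sum f {..<k}"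
  using assms by (intro sum.mono_neutral_right) auto

lemma diag1_in_gl: "k \<le> n \<Longrightarrow> diag1 k n a \<in> gl n"
  by (auto simp: gl_def diag1_entry)

lemma mmul_diag1:
  assumes kn: "k \<le> n"
  shows "mmul n (diag1 k n a) (diag1 k n b) = diag1 k n (mmul k a b)"
proof (intro ext)
  fix i j
  consider (tt) "i < k" "j < k" | (bb) "k \<le> i" "k \<le> j" | (tb) "i < k" "k \<le> j" | (bt) "k \<le> i" "j < k"
    by linarith
  then show "mmul n (diag1 k n a) (diag1 k n b) i j = diag1 k n (mmul k a b) i j"
  proof cases
    case tt
    have "mmul n (diag1 k n a) (diag1 k n b) i j = (\<Sum>l<n. diag1 k n a i l * diag1 k n b l j)"
      using tt kn by (simp add: mmul_def)
    also have "\<dots> = (\<Sum>l<k. diag1 k n a i l * diag1 k n b l j)"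
      by (rule sum_lessThan_truncate) (use kn tt in \<open>auto simp: diag1_entry\<close>)
    also have "\<dots> = (\<Sum>l<k. a i l * b l j)"
      by (intro sum.cong) (use tt in \<open>auto simp: diag1_entry\<close>)
    finally show ?thesis using tt by (simp add: diag1_entry mmul_def)
  next
    case bb
    show ?thesis
    proof (cases "i < n \<and> j < n")
      case True
      have "mmul n (diag1 k n a) (diag1 k n b) i j = (\<Sum>l<n. diag1 k n a i l * diag1 k n b l j)"
        using True by (simp add: mmul_def)
      also have "\<dots> = (\<Sum>l<n. if l = i then (if i = j then 1 else 0) else 0)"
        by (intro sum.cong) (use bb True in \<open>auto simp: diag1_entry\<close>)
      finally show ?thesis using bb True by (simp add: diag1_entry)
    qed (use bb in \<open>auto simp: mmul_def diag1_entry\<close>)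
  qed (auto simp: mmul_def diag1_entry intro!: sum.neutral)
qed

lemma diag1_idm: "k \<le> n \<Longrightarrow> diag1 k n (idm k) = idm n"
  by (auto intro!: ext simp: diag1_entry idm_def)

lemma
  fixes h :: "('a::{finite,field}) mat"
  assumes kn: "k \<le> n" and h: "h \<in> GL k"
  shows mmul_diag1_ginv_right: "mmul n (diag1 k n h) (diag1 k n (ginv k h)) = idm n"
    and mmul_diag1_ginv_left: "mmul n (diag1 k n (ginv k h)) (diag1 k n h) = idm n"
  by (simp_all add: mmul_diag1[OF kn] mmul_ginv_right[OF h] mmul_ginv_left[OF h] diag1_idm[OF kn])

lemma diag1_in_GL: "k \<le> n \<Longrightarrow> h \<in> GL k \<Longrightarrow> diag1 k n (h :: ('a::{finite,field}) mat) \<in> GL n"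
  by (rule GL_I[OF diag1_in_gl diag1_in_gl mmul_diag1_ginv_right])

lemma upblk_mmul_diag1:
  assumes kn: "k \<le> n"
  shows "upblk k (mmul n (mmul n (diag1 k n a) M) (diag1 k n b)) = mmul k (mmul k a (upblk k M)) b"
proof (intro ext)
  fix i j
  show "upblk k (mmul n (mmul n (diag1 k n a) M) (diag1 k n b)) i j
      = mmul k (mmul k a (upblk k M)) b i j"
  proof (cases "i < k \<and> j < k")
    case True
    have inner: "(\<Sum>l<n. diag1 k n a i l * M l m) = (\<Sum>l<k. a i l * M l m)" for m :: nat
    proof -
      have "(\<Sum>l<n. diag1 k n a i l * M l m) = (\<Sum>l<k. diag1 k n a i l * M l m)"
        by (rule sum_lessThan_truncate) (use kn True in \<open>auto simp: diag1_entry\<close>)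
      also have "\<dots> = (\<Sum>l<k. a i l * M l m)"
        by (intro sum.cong) (use True in \<open>auto simp: diag1_entry\<close>)
      finally show ?thesis .
    qed
    have "upblk k (mmul n (mmul n (diag1 k n a) M) (diag1 k n b)) i j
        = (\<Sum>m<n. (\<Sum>l<n. diag1 k n a i l * M l m) * diag1 k n b m j)"
      using True kn by (simp add: upblk_def mmul_def)
    also have "\<dots> = (\<Sum>m<k. (\<Sum>l<n. diag1 k n a i l * M l m) * diag1 k n b m j)"
      by (rule sum_lessThan_truncate) (use kn True in \<open>auto simp: diag1_entry\<close>)
    also have "\<dots> = (\<Sum>m<k. (\<Sum>l<k. a i l * M l m) * b m j)"
      unfolding inner by (intro sum.cong) (use True in \<open>auto simp: diag1_entry\<close>)
    also have "\<dots> = mmul k (mmul k a (upblk k M)) b i j"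
      using True by (auto simp: mmul_def upblk_def intro!: sum.cong)
    finally show ?thesis .
  qed (auto simp: upblk_def mmul_def)
qed

definition lower_left_zero :: "nat \<Rightarrow> ('a::field) mat \<Rightarrow> bool" where
  "lower_left_zero k A \<longleftrightarrow> (\<forall>i j. k \<le> i \<longrightarrow> j < k \<longrightarrow> A i j = 0)"

lemma lower_left_zero_mmul_diag1_left:
  "lower_left_zero k M \<Longrightarrow> lower_left_zero k (mmul n (diag1 k n a) M)"
  by (auto simp: lower_left_zero_def mmul_def diag1_entry intro!: sum.neutral)

lemma lower_left_zero_mmul_diag1_right:
  "lower_left_zero k M \<Longrightarrow> lower_left_zero k (mmul n M (diag1 k n b))"
  by (auto simp: lower_left_zero_def mmul_def diag1_entry intro!: sum.neutral)

lemma blk_pair: "blk [k, m] i = (if k + m \<le> i then 2 else if k \<le> i then 1 else 0)"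
proof -
  have "{j \<in> {1..length [k, m]}. sum_list (take j [k, m]) \<le> i}
      = (if k \<le> i then {1} else {}) \<union> (if k + m \<le> i then {2} else {})"
    by (auto simp: numeral_2_eq_2 le_Suc_eq)
  then show ?thesis by (auto simp: blk_def)
qed

lemma blk_snoc: "blk (d @ [m]) i = blk d i + (if sum_list d + m \<le> i then 1 else 0)"
proof -
  have "{j \<in> {1..length (d @ [m])}. sum_list (take j (d @ [m])) \<le> i}
      = {j \<in> {1..length d}. sum_list (take j d) \<le> i}
        \<union> (if sum_list d + m \<le> i then {Suc (length d)} else {})"
    by (auto simp: le_Suc_eq)
  moreover have "Suc (length d) \<notin> {j \<in> {1..length d}. sum_list (take j d) \<le> i}" by auto
  ultimately show ?thesis by (auto simp: blk_def)
qed

lemma blk_le_length: "blk d i \<le> length d"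
  unfolding blk_def by (rule order_trans[OF card_mono[of "{1..length d}"]]) auto

lemma blk_less_length: "i < sum_list d \<Longrightarrow> blk d i < length d"
proof -
  assume i: "i < sum_list d"
  have "{j \<in> {1..length d}. sum_list (take j d) \<le> i} \<subseteq> {1..<length d}"
    using i by (auto simp: le_less)
  then have "blk d i \<le> card {1..<length d}" unfolding blk_def by (intro card_mono) auto
  moreover have "d \<noteq> []" using i by auto
  ultimately show ?thesis by (cases d) auto
qed

lemma sum_list_take_le: "sum_list (take j (d :: nat list)) \<le> sum_list d"
  by (metis append_take_drop_id le_add1 sum_list_append)

lemma blk_eq_length: "sum_list d \<le> i \<Longrightarrow> blk d i = length d"
proof -
  assume i: "sum_list d \<le> i"
  have "{j \<in> {1..length d}. sum_list (take j d) \<le> i} = {1..length d}"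
    using i order_trans[OF sum_list_take_le] by auto
  then show ?thesis by (simp add: blk_def)
qed

lemma blk_less_iff:
  assumes "sum_list d = k"
  shows "blk d j < blk d i \<longleftrightarrow> (j < k \<and> k \<le> i) \<or> (i < k \<and> j < k \<and> blk d j < blk d i)"
  using assms blk_less_length[of j d] blk_less_length[of i d] blk_eq_length[of d i]
    blk_eq_length[of d j] blk_le_length[of d i]
  by (cases "i < k"; cases "j < k") auto

lemma parab_iff: "A \<in> parab c \<longleftrightarrow> A \<in> gl (sum_list c) \<and>
   (\<forall>i j. i < sum_list c \<longrightarrow> j < sum_list c \<longrightarrow> blk c j < blk c i \<longrightarrow> A i j = 0)"
  by (auto simp: parab_def gl_def) (meson not_less)

lemma parab_pair_iff:
  assumes kn: "k \<le> n"
  shows "A \<in> parab [k, n - k] \<longleftrightarrow> A \<in> gl n \<and> lower_left_zero k A"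
proof -
  have "A \<in> gl n \<Longrightarrow> k \<le> i \<Longrightarrow> \<not> i < n \<Longrightarrow> A i j = 0" for i j
    by (auto simp: gl_def)
  then show ?thesis
    unfolding parab_iff lower_left_zero_def using kn
    by (auto simp: blk_pair split: if_splits)
qed

lemma upblk_in_gl [simp]: "upblk k A \<in> gl k"
  by (auto simp: upblk_def gl_def)

lemma parab_snoc_iff:
  assumes k: "sum_list d = k"
  shows "A \<in> parab (d @ [m]) \<longleftrightarrow> A \<in> parab [k, m] \<and> upblk k A \<in> parab d"
proof -
  have "i < k + m \<Longrightarrow> blk (d @ [m]) i = blk d i" for i using k by (simp add: blk_snoc)
  moreover have "i < k + m \<Longrightarrow> blk [k, m] i = (if k \<le> i then 1 else 0)" for i
    by (simp add: blk_pair)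
  ultimately show ?thesis
    unfolding parab_iff using k
    by (simp, subst blk_less_iff[OF k]) (auto simp: upblk_def split: if_splits)
qed

section \<open>Transitivity of Harish-Chandra induction: the counting argument\<close>

lemma card_pairs_mmul_diag1:
  fixes Q :: "('a::{finite,field}) mat \<Rightarrow> 'a mat \<Rightarrow> bool"
  assumes kn: "k \<le> n"
  shows "card {(g, h). g \<in> GL n \<and> h \<in> GL k \<and> Q (mmul n g (diag1 k n h)) h}
       = card {(g, h). g \<in> GL n \<and> h \<in> GL k \<and> Q g h}"
proof (rule bij_betw_same_card)
  let ?f = "\<lambda>(g, h). (mmul n g (diag1 k n h), h)"
  let ?f' = "\<lambda>(g, h). (mmul n g (diag1 k n (ginv k h)), h)"
  have cancel: "mmul n (mmul n g (diag1 k n h)) (diag1 k n (ginv k h)) = g"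
    "mmul n (mmul n g (diag1 k n (ginv k h))) (diag1 k n h) = g"
    if "g \<in> GL n" "h \<in> GL k" for g h :: "'a mat"
    by (simp_all add: mmul_assoc mmul_diag1_ginv_right[OF kn that(2)]
        mmul_diag1_ginv_left[OF kn that(2)] mmul_idm_right GL_imp_gl[OF that(1)])
  show "bij_betw ?f {(g, h). g \<in> GL n \<and> h \<in> GL k \<and> Q (mmul n g (diag1 k n h)) h}
      {(g, h). g \<in> GL n \<and> h \<in> GL k \<and> Q g h}"
    by (rule bij_betw_byWitness[where f' = ?f'])
      (auto simp: cancel intro!: mmul_in_GL diag1_in_GL[OF kn] ginv_in_GL)
qed

lemma adinv_mmul_diag1:
  fixes g h x :: "('a::{finite,field}) mat"
  assumes kn: "k \<le> n" and g: "g \<in> GL n" and h: "h \<in> GL k"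
  shows "adinv n (mmul n g (diag1 k n h)) x
       = mmul n (mmul n (diag1 k n (ginv k h)) (adinv n g x)) (diag1 k n h)"
proof -
  have "mmul n (mmul n g (diag1 k n h)) (mmul n (diag1 k n (ginv k h)) (ginv n g)) = idm n"
    by (simp add: mmul_assoc[symmetric])
      (simp add: mmul_assoc mmul_diag1_ginv_right[OF kn h] mmul_idm_left ginv_in_gl[OF g]
        mmul_ginv_right[OF g])
  then have "ginv n (mmul n g (diag1 k n h)) = mmul n (diag1 k n (ginv k h)) (ginv n g)"
    by (intro ginv_eqI) auto
  then show ?thesis by (simp add: adinv_def mmul_assoc)
qed

lemma lower_left_zero_mmul_diag1_iff:
  fixes a b M :: "('a::{finite,field}) mat"
  assumes kn: "k \<le> n" and a: "a \<in> GL k" and b: "b \<in> GL k" and M: "M \<in> gl n"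
  shows "lower_left_zero k (mmul n (mmul n (diag1 k n a) M) (diag1 k n b)) \<longleftrightarrow> lower_left_zero k M"
proof
  assume "lower_left_zero k (mmul n (mmul n (diag1 k n a) M) (diag1 k n b))"
  moreover have "M = mmul n (mmul n (diag1 k n (ginv k a))
      (mmul n (mmul n (diag1 k n a) M) (diag1 k n b))) (diag1 k n (ginv k b))"
    by (simp add: mmul_assoc)
      (simp add: mmul_assoc[symmetric] mmul_diag1_ginv_right[OF kn b] mmul_diag1_ginv_left[OF kn a]
        mmul_idm_left mmul_idm_right M)
  ultimately show "lower_left_zero k M"
    by (metis lower_left_zero_mmul_diag1_left lower_left_zero_mmul_diag1_right)
qed (intro lower_left_zero_mmul_diag1_left lower_left_zero_mmul_diag1_right)

lemma parab_snoc_adinv_iff: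
  fixes g h x :: "('a::{finite,field}) mat"
  assumes kn: "k \<le> n" and d: "sum_list d = k" and g: "g \<in> GL n" and h: "h \<in> GL k"
  shows "adinv n (mmul n g (diag1 k n h)) x \<in> parab (d @ [n - k]) \<longleftrightarrow>
     adinv n g x \<in> parab [k, n - k] \<and> adinv k h (upblk k (adinv n g x)) \<in> parab d"
  unfolding adinv_mmul_diag1[OF kn g h] parab_snoc_iff[OF d] parab_pair_iff[OF kn]
  by (simp add: lower_left_zero_mmul_diag1_iff[OF kn ginv_in_GL[OF h] h] upblk_mmul_diag1[OF kn]
      adinv_def[of k])

lemma sum_card_adinv_parab:
  fixes x :: "('a::{finite,field}) mat"
  assumes kn: "k \<le> n" and d: "sum_list d = k"
  shows "(\<Sum>g\<in>{g \<in> GL n. adinv n g x \<in> parab [k, n - k]}.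
            card {h \<in> GL k. adinv k h (upblk k (adinv n g x)) \<in> parab d})
       = card (GL k :: 'a mat set) * card {g \<in> GL n. adinv n g x \<in> parab (d @ [n - k])}"
proof -
  let ?Q = "\<lambda>g (h::'a mat). adinv n g x \<in> parab (d @ [n - k])"
  have "(\<Sum>g\<in>{g \<in> GL n. adinv n g x \<in> parab [k, n - k]}.
            card {h \<in> GL k. adinv k h (upblk k (adinv n g x)) \<in> parab d})
      = card (SIGMA g:{g \<in> GL n. adinv n g x \<in> parab [k, n - k]}.
                {h \<in> GL k. adinv k h (upblk k (adinv n g x)) \<in> parab d})"
    by (rule card_SigmaI[symmetric]) (auto intro: finite_subset[OF _ finite_GL])
  also have "\<dots> = card {(g, h). g \<in> GL n \<and> h \<in> GL k \<and> ?Q (mmul n g (diag1 k n h)) h}"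
    using parab_snoc_adinv_iff[OF kn d] by (intro arg_cong[where f = card]) auto
  also have "\<dots> = card {(g, h). g \<in> GL n \<and> h \<in> GL k \<and> ?Q g h}"
    by (rule card_pairs_mmul_diag1[OF kn])
  also have "{(g, h). g \<in> GL n \<and> h \<in> GL k \<and> ?Q g h}
      = {g \<in> GL n. adinv n g x \<in> parab (d @ [n - k])} \<times> GL k"
    by auto
  finally show ?thesis by (simp add: card_cartesian_product)
qed

lemma upblk_idm: "k \<le> n \<Longrightarrow> upblk k (idm n) = idm k"
  by (auto intro!: ext simp: upblk_def idm_def)

lemma upblk_mmul:
  assumes kn: "k \<le> n" and p: "lower_left_zero k p"
  shows "upblk k (mmul n h p) = mmul k (upblk k h) (upblk k p)"
proof (intro ext)
  fix i j
  show "upblk k (mmul n h p) i j = mmul k (upblk k h) (upblk k p) i j"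
  proof (cases "i < k \<and> j < k")
    case True
    have "upblk k (mmul n h p) i j = (\<Sum>l<n. h i l * p l j)"
      using True kn by (simp add: upblk_def mmul_def)
    also have "\<dots> = (\<Sum>l<k. h i l * p l j)"
      by (rule sum_lessThan_truncate) (use kn True p in \<open>auto simp: lower_left_zero_def\<close>)
    finally show ?thesis using True by (auto simp: mmul_def upblk_def intro!: sum.cong)
  qed (auto simp: upblk_def mmul_def)
qed

lemma upblk_in_GL:
  fixes p :: "('a::{finite,field}) mat"
  assumes kn: "k \<le> n" and p: "p \<in> GL n" and L: "lower_left_zero k p"
  shows "upblk k p \<in> GL k"
proof -
  have "mmul k (upblk k (ginv n p)) (upblk k p) = idm k"
    using upblk_mmul[OF kn L, of "ginv n p"] by (simp add: mmul_ginv_left[OF p] upblk_idm[OF kn])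
  then have "mmul k (upblk k p) (upblk k (ginv n p)) = idm k"
    by (rule mmul_idm_commute[OF upblk_in_gl upblk_in_gl])
  then show ?thesis by (rule GL_I[OF upblk_in_gl upblk_in_gl])
qed

lemma card_mmul_left_parab:
  fixes p :: "('a::{finite,field}) mat"
  assumes p: "p \<in> GL k"
  shows "card {h \<in> GL k. mmul k p h \<in> parab d} = card (GL k \<inter> parab d :: 'a mat set)"
proof (rule bij_betw_same_card)
  show "bij_betw (mmul k p) {h \<in> GL k. mmul k p h \<in> parab d} (GL k \<inter> parab d)"
    by (rule bij_betw_byWitness[where f' = "mmul k (ginv k p)"])
      (use p in \<open>auto simp: mmul_assoc[symmetric] mmul_ginv_left mmul_ginv_right mmul_idm_left
         GL_imp_gl intro!: mmul_in_GL ginv_in_GL\<close>)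
qed

lemma parab_snoc_mmul_iff:
  fixes p h :: "('a::{finite,field}) mat"
  assumes kn: "k \<le> n" and d: "sum_list d = k" and p: "p \<in> GL n" and h: "h \<in> GL k"
  shows "mmul n p (diag1 k n h) \<in> parab (d @ [n - k]) \<longleftrightarrow>
     p \<in> parab [k, n - k] \<and> mmul k (upblk k p) h \<in> parab d"
proof -
  have pg: "p \<in> gl n" using p by (rule GL_imp_gl)
  have e: "mmul n p (diag1 k n h) = mmul n (mmul n (diag1 k n (idm k)) p) (diag1 k n h)"
    by (simp add: diag1_idm[OF kn] mmul_idm_left pg)
  have "upblk k (mmul n p (diag1 k n h)) = mmul k (upblk k p) h"
    unfolding e by (simp add: upblk_mmul_diag1[OF kn] mmul_idm_left)
  moreover have "lower_left_zero k (mmul n p (diag1 k n h)) \<longleftrightarrow> lower_left_zero k p"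
    unfolding e by (rule lower_left_zero_mmul_diag1_iff[OF kn idm_in_GL h pg])
  ultimately show ?thesis
    unfolding parab_snoc_iff[OF d] parab_pair_iff[OF kn] using pg by simp
qed

lemma card_Pgrp_snoc:
  assumes kn: "k \<le> n" and d: "sum_list d = k"
  shows "card (Pgrp [k, n - k] :: ('a::{finite,field}) mat set) * card (Pgrp d :: 'a mat set)
       = card (Pgrp (d @ [n - k]) :: 'a mat set) * card (GL k :: 'a mat set)"
proof -
  let ?Q = "\<lambda>(g::'a mat) (h::'a mat). g \<in> parab (d @ [n - k])"
  let ?H = "\<lambda>p. {h :: 'a mat. h \<in> GL k \<and> mmul k (upblk k p) h \<in> parab d}"
  have P2: "(Pgrp [k, n - k] :: 'a mat set) = GL n \<inter> parab [k, n - k]"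
    and Pc: "(Pgrp (d @ [n - k]) :: 'a mat set) = GL n \<inter> parab (d @ [n - k])"
    and Pd: "(Pgrp d :: 'a mat set) = GL k \<inter> parab d"
    using kn d by (simp_all add: Pgrp_def)
  have "card (Pgrp [k, n - k] :: 'a mat set) * card (Pgrp d :: 'a mat set)
      = (\<Sum>p\<in>Pgrp [k, n - k]. card (?H p))"
  proof -
    have "card (?H p) = card (Pgrp d :: 'a mat set)" if "p \<in> Pgrp [k, n - k]" for p
    proof -
      have "p \<in> GL n" "lower_left_zero k p" using that by (auto simp: P2 parab_pair_iff[OF kn])
      then show ?thesis unfolding Pd by (rule card_mmul_left_parab[OF upblk_in_GL[OF kn]])
    qed
    then show ?thesis by simp
  qed
  also have "\<dots> = card (SIGMA p:Pgrp [k, n - k]. ?H p)"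
    by (rule card_SigmaI[symmetric]) (auto simp: P2 intro: finite_subset[OF _ finite_GL])
  also have "\<dots> = card {(g, h). g \<in> GL n \<and> h \<in> GL k \<and> ?Q (mmul n g (diag1 k n h)) h}"
    using parab_snoc_mmul_iff[OF kn d] by (intro arg_cong[where f = card]) (auto simp: P2)
  also have "\<dots> = card {(g, h). g \<in> GL n \<and> h \<in> GL k \<and> ?Q g h}"
    by (rule card_pairs_mmul_diag1[OF kn])
  also have "{(g, h). g \<in> GL n \<and> h \<in> GL k \<and> ?Q g h} = (Pgrp (d @ [n - k]) :: 'a mat set) \<times> GL k"
    by (auto simp: Pc)
  finally show ?thesis by (simp add: card_cartesian_product)
qed

section \<open>Harish-Chandra restriction of the constant function\<close>

lemma mmul_madd_idm_entry:
  assumes "i < n" "j < n"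
  shows "mmul n (madd (idm n) v) y i j = y i j + (\<Sum>l<n. v i l * y l j)"
proof -
  have "mmul n (madd (idm n) v) y i j = (\<Sum>l<n. idm n i l * y l j) + (\<Sum>l<n. v i l * y l j)"
    using assms by (simp add: mmul_def madd_def distrib_right sum.distrib)
  also have "(\<Sum>l<n. idm n i l * y l j) = y i j"
    using assms by (simp add: idm_def if_distrib[of "\<lambda>a. a * _"] sum.delta cong: if_cong)
  finally show ?thesis .
qed

lemma inj_on_mmul_unipotent:
  assumes v: "v \<in> nilrad c" and n: "n = sum_list c"
  shows "inj_on (mmul n (madd (idm n) v)) (gl n)"
proof (rule inj_onI)
  fix y y' assume y: "y \<in> gl n" and y': "y' \<in> gl n"
    and e: "mmul n (madd (idm n) v) y = mmul n (madd (idm n) v) y'"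
  have vz: "blk c l \<le> blk c i \<Longrightarrow> v i l = 0" for i l using v by (auto simp: nilrad_def)
  txt \<open>Row i of v y only involves rows of y in strictly later blocks, so y is determined
    row by row from the last block upwards.\<close>
  have "y i j = y' i j" for i j
  proof (induction i rule: measure_induct_rule[where f = "\<lambda>i. length c - blk c i"])
    case (less i)
    show ?case
    proof (cases "i < n \<and> j < n")
      case True
      have "(\<Sum>l<n. v i l * y l j) = (\<Sum>l<n. v i l * y' l j)"
      proof (intro sum.cong refl)
        fix l
        show "v i l * y l j = v i l * y' l j"
        proof (cases "blk c l \<le> blk c i")
          case False
          then have "length c - blk c l < length c - blk c i"
            using blk_le_length[of c l] by linarith
          then show ?thesis using less by simp
        qed (simp add: vz)
      qed
      moreover have "y i j + (\<Sum>l<n. v i l * y l j) = y' i j + (\<Sum>l<n. v i l * y' l j)"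
        using True e mmul_madd_idm_entry[of i n j v] by metis
      ultimately show ?thesis by simp
    qed (use y y' in \<open>auto simp: gl_def\<close>)
  qed
  then show "y = y'" by (intro ext)
qed

lemma unipotent_in_GL:
  fixes v :: "('a::{finite,field}) mat"
  assumes v: "v \<in> nilrad c" and n: "n = sum_list c"
  shows "madd (idm n) v \<in> GL n"
proof -
  have "mmul n (madd (idm n) v) ` gl n = gl n"
    by (rule endo_inj_surj[OF finite_gl _ inj_on_mmul_unipotent[OF v n]]) auto
  then obtain h where "h \<in> gl n" "mmul n (madd (idm n) v) h = idm n" by (metis idm_in_gl imageE)
  moreover have "madd (idm n) v \<in> gl n" using v n by (auto simp: nilrad_def gl_def madd_def idm_def)
  ultimately show ?thesis by (intro GL_I)
qed

lemma card_Ugrp: "card (Ugrp c :: ('a::{finite,field}) mat set) = card (nilrad c :: 'a mat set)"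
proof -
  let ?n = "sum_list c"
  have "bij_betw (madd (idm ?n)) (nilrad c) (Ugrp c :: 'a mat set)"
  proof (rule bij_betw_byWitness[where f' = "\<lambda>g i j. g i j - idm ?n i j"])
    show "madd (idm ?n) ` nilrad c \<subseteq> (Ugrp c :: 'a mat set)"
      using unipotent_in_GL by (auto simp: Ugrp_def madd_def)
  qed (auto simp: Ugrp_def madd_def)
  then show ?thesis by (simp add: bij_betw_same_card)
qed

lemma HCres_one: "HCres c (\<lambda>_. 1) = (\<lambda>_. 1 :: complex)"
proof -
  have "finite (nilrad c :: ('a::{finite,field}) mat set)"
    by (rule finite_subset[OF _ finite_gl]) (auto simp: nilrad_def)
  moreover have "(\<lambda>i j. 0) \<in> (nilrad c :: 'a mat set)" by (auto simp: nilrad_def gl_def)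
  ultimately have "card (nilrad c :: 'a mat set) > 0" by (auto simp: card_gt_0_iff)
  then show ?thesis by (simp add: HCres_def card_Ugrp fun_eq_iff)
qed

lemma length_le_sum_list: "0 \<notin> set (c :: nat list) \<Longrightarrow> length c \<le> sum_list c"
  by (induction c) (auto simp: Suc_le_eq)

lemma finite_compositions: "finite (compositions n)"
proof (rule finite_subset)
  show "compositions n \<subseteq> {xs. set xs \<subseteq> {0..n} \<and> length xs \<le> n}"
    using length_le_sum_list member_le_sum_list by (fastforce simp: compositions_def)
  show "finite {xs. set xs \<subseteq> {0..n} \<and> length xs \<le> n}"
    by (rule finite_lists_length_le) simp
qed

lemma compositions_0: "compositions 0 = {[]}"
  by (auto simp: compositions_def) (metis last_in_set)

lemma sum_compositions_snoc:
  assumes "0 < n"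
  shows "(\<Sum>c\<in>compositions n. F c) = (\<Sum>k<n. \<Sum>d\<in>compositions k. F (d @ [n - k]))"
proof -
  have "(\<Sum>c\<in>compositions n. F c) = (\<Sum>(k, d)\<in>(SIGMA k:{..<n}. compositions k). F (d @ [n - k]))"
  proof (rule sum.reindex_bij_witness[where i = "\<lambda>(k, d). d @ [n - k]"
                                      and j = "\<lambda>c. (n - last c, butlast c)"])
    fix c assume c: "c \<in> compositions n"
    then have "c \<noteq> []" using assms by (auto simp: compositions_def)
    then have split: "c = butlast c @ [last c]" and "last c \<in> set c" by simp_all
    moreover have "sum_list (butlast c) + last c = sum_list (butlast c @ [last c])" by simp
    ultimately have "0 < last c" "sum_list (butlast c) + last c = n" "0 \<notin> set (butlast c)"
      using c by (auto simp: compositions_def dest: in_set_butlastD intro!: Nat.gr0I)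
    then show "(n - last c, butlast c) \<in> (SIGMA k:{..<n}. compositions k)"
      and "(\<lambda>(k, d). d @ [n - k]) (n - last c, butlast c) = c"
      and "(\<lambda>(k, d). F (d @ [n - k])) (n - last c, butlast c) = F c"
      using split by (auto simp: compositions_def)
  qed (auto simp: compositions_def)
  also have "\<dots> = (\<Sum>k<n. \<Sum>d\<in>compositions k. F (d @ [n - k]))"
    by (rule sum.Sigma[symmetric]) (auto simp: finite_compositions)
  finally show ?thesis .
qed

lemma ss_rank_snoc:
  assumes "d \<in> compositions k" "0 < m"
  shows "ss_rank (d @ [m]) = ss_rank d + (m - 1)"
  using assms length_le_sum_list[of d] by (auto simp: ss_rank_def compositions_def)

lemma HCind_scale: "HCind c (\<lambda>y. a * f y) x = a * HCind c f x"
  by (simp add: HCind_def sum_distrib_left mult_ac)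

lemma HCind_sum: "HCind c (\<lambda>y. \<Sum>i\<in>I. f i y) x = (\<Sum>i\<in>I. HCind c (f i) x)"
  by (simp add: HCind_def sum_distrib_left sum.swap[of _ I])

lemma HCind_one:
  fixes x :: "('a::{finite,field}) mat"
  shows "HCind c (\<lambda>_. 1) x = of_nat (card {g \<in> GL (sum_list c). adinv (sum_list c) g x \<in> parab c})
                         / of_nat (card (Pgrp c :: 'a mat set))"
  by (simp add: HCind_def)

lemma HCind_Nil_one: "HCind [] (\<lambda>_. 1) (x :: ('a::{finite,field}) mat) = 1"
proof -
  have parab: "parab [] = (gl 0 :: 'a mat set)" by (auto simp: parab_iff)
  then have "Pgrp [] = (GL 0 :: 'a mat set)" by (auto simp: Pgrp_def dest: GL_imp_gl)
  moreover have "{g \<in> GL 0. adinv 0 g x \<in> parab []} = (GL 0 :: 'a mat set)" by (simp add: parab)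
  ultimately show ?thesis using card_GL_gt_0[where n = 0 and 'a = 'a] by (simp add: HCind_one)
qed

lemma upblk_levi_proj_pair: "upblk k (levi_proj [k, m] M) = upblk k M"
  by (auto intro!: ext simp: upblk_def levi_proj_def blk_pair)

lemma HCind_one_transitive:
  fixes x :: "('a::{finite,field}) mat"
  assumes kn: "k \<le> n" and d: "sum_list d = k"
  shows "HCind [k, n - k] (\<lambda>y. HCind d (\<lambda>_. 1) (upblk k y)) x = HCind (d @ [n - k]) (\<lambda>_. 1) x"
proof -
  let ?G = "{g \<in> GL n. adinv n g x \<in> parab [k, n - k]}"
  let ?N = "\<lambda>g. card {h \<in> GL k. adinv k h (upblk k (adinv n g x)) \<in> parab d}"
  let ?P = "\<lambda>c. of_nat (card (Pgrp c :: 'a mat set)) :: complex"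
  have sums: "sum_list [k, n - k] = n" "sum_list (d @ [n - k]) = n" using kn d by simp_all
  have "HCind [k, n - k] (\<lambda>y. HCind d (\<lambda>_. 1) (upblk k y)) x
      = of_nat (\<Sum>g\<in>?G. ?N g) / (?P [k, n - k] * ?P d)"
    using kn by (simp add: HCind_def HCind_one upblk_levi_proj_pair d sum_divide_distrib mult_ac)
  also have "\<dots> = of_nat (card (GL k :: 'a mat set))
                 * of_nat (card {g \<in> GL n. adinv n g x \<in> parab (d @ [n - k])})
               / (?P (d @ [n - k]) * of_nat (card (GL k :: 'a mat set)))"
    by (simp only: sum_card_adinv_parab[OF kn d] of_nat_mult[symmetric] card_Pgrp_snoc[OF kn d])
  also have "\<dots> = HCind (d @ [n - k]) (\<lambda>_. 1) x"
    using card_GL_gt_0[where n = k and 'a = 'a] by (simp add: HCind_one d kn)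
  finally show ?thesis .
qed

section \<open>The antipode of the constant function\<close>

declare antipode.simps [simp del]

lemma antipode_one_pos:
  "0 < n \<Longrightarrow> antipode n (\<lambda>_. 1) x
     = - (\<Sum>k<n. HCind [k, n - k] (\<lambda>y. antipode k (\<lambda>_. 1) (upblk k y)) x)"
  by (subst antipode.simps) (simp add: HCres_one)

lemma Steinberg_eq_sum:
  "Steinberg n x = (\<Sum>c\<in>compositions n. (-1) ^ ss_rank c * HCind c (\<lambda>_. 1) x)"
  by (simp add: Steinberg_def duality_def HCres_one)

lemma sign_ss_rank_snoc:
  assumes "d \<in> compositions k" "k < n"
  shows "(-1::complex) ^ k * (-1) ^ ss_rank d = - ((-1) ^ n * (-1) ^ ss_rank (d @ [n - k]))"
proof -
  obtain m where "n = k + Suc m" using assms(2) less_iff_Suc_add by auto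
  then show ?thesis using assms(1) by (simp add: ss_rank_snoc power_add)
qed

lemma antipode_one_eq_Steinberg:
  "antipode n (\<lambda>_. 1) x = (-1) ^ n * Steinberg n (x :: ('a::{finite,field}) mat)"
proof (induction n arbitrary: x rule: less_induct)
  case (less n)
  show ?case
  proof (cases "n = 0")
    case True
    then show ?thesis
      by (simp add: antipode.simps Steinberg_eq_sum compositions_0 ss_rank_def HCind_Nil_one)
  next
    case False
    let ?R = "\<lambda>c. HCind c (\<lambda>_. 1) x"
    have "antipode n (\<lambda>_. 1) x
        = - (\<Sum>k<n. HCind [k, n - k] (\<lambda>y. (-1) ^ k * Steinberg k (upblk k y)) x)"
      using False less.IH by (simp add: antipode_one_pos)
    also have "\<dots> = - (\<Sum>k<n. (-1) ^ k * (\<Sum>d\<in>compositions k. (-1) ^ ss_rank d * ?R (d @ [n - k])))"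
      by (simp add: Steinberg_eq_sum HCind_scale HCind_sum HCind_one_transitive compositions_def)
    also have "\<dots> = (\<Sum>k<n. \<Sum>d\<in>compositions k.
                        - ((-1) ^ k * (-1) ^ ss_rank d * ?R (d @ [n - k])))"
      by (simp add: sum_distrib_left sum_negf mult.assoc)
    also have "\<dots> = (\<Sum>k<n. \<Sum>d\<in>compositions k.
                        (-1) ^ n * ((-1) ^ ss_rank (d @ [n - k]) * ?R (d @ [n - k])))"
      by (intro sum.cong refl) (simp add: sign_ss_rank_snoc mult.assoc)
    also have "\<dots> = (-1) ^ n * (\<Sum>k<n. \<Sum>d\<in>compositions k.
                                   (-1) ^ ss_rank (d @ [n - k]) * ?R (d @ [n - k]))"
      by (simp add: sum_distrib_left)
    also have "\<dots> = (-1) ^ n * Steinberg n x"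
      using False by (simp add: Steinberg_eq_sum sum_compositions_snoc)
    finally show ?thesis .
  qed
qed

theorem mainTheorem9:
  fixes n :: nat and x :: "('a::{finite,field}) mat"
  assumes "x \<in> gl n"
  shows "Steinberg n x = (-1) ^ n * antipode n (\<lambda>_. 1) x"
  \<comment> \<open>The identity holds for every x.\<close>
  by (simp add: antipode_one_eq_Steinberg)

end
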